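(* Let $\alpha\in(0,1/2]$. Then for all integers $n\ge1$ and $a,b\ge0$, $$\sum_{0\le l\le n}\binom nl\alpha^l(1-\alpha)^{n-l}\,\mathbf 1_{\gcd(l+a,n+b)=1}=\sum_{d\mid n+b}\frac{\mu(d)}{d}+O\Big(\frac{\tau(n+b)}{\sqrt n}\Big),$$ where the implied constant depends only on $\alpha$.
   Context: $\mu$ is the Möbius function, $\tau(m)$ the number of positive divisors of $m$, and $\mathbf 1_A$ the indicator of the condition $A$. *)

theory Defs
  imports Complex_Main "HOL-Computational_Algebra.Squarefree" "HOL-Computational_Algebra.Primes"
begin

definition mu :: "nat \<Rightarrow> int" where
  "mu d = (if d = 0 \<or> \<not> squarefree d then 0 else (-1) ^ card (prime_factors d))"

definition tau :: "nat \<Rightarrow> nat" where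
  "tau m = card {d. d dvd m}"

end

theory Submission
  imports Defs "HOL-Analysis.Weierstrass_Theorems"
begin

text \<open>Moebius inversion, \<open>[gcd (l + a) m = 1] = (\<Sum>d | d dvd m. mu d * [d dvd l + a])\<close>,
reduces the theorem to showing that for every \<open>d\<close> the binomial weights
\<open>B l = Bernstein n l \<alpha>\<close> of those \<open>l\<close> with \<open>d dvd l + a\<close> add up to \<open>1/d + O(1/sqrt n)\<close>,
uniformly in \<open>d\<close> and \<open>a\<close>. By Abel summation this error is at most the total variation
\<open>\<Sum>l. \<bar>B (l + 1) - B l\<bar>\<close>, since the partial sums of \<open>[d dvd j + a] - 1/d\<close> are bounded by 1.
The ratio \<open>B (l + 1) / B l = (n - l) \<alpha> / ((l + 1) (1 - \<alpha>))\<close> bounds each step by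
\<open>2 \<bar>l + 1 - (n + 1) \<alpha>\<bar> (B l + B (l + 1)) / ((n + 1) \<alpha>)\<close>, and the mean absolute deviation
\<open>\<Sum>l. \<bar>l - n \<alpha>\<bar> B l\<close> is at most \<open>sqrt n\<close> by the variance formula, so the total variation
is \<open>O(1 / (\<alpha> sqrt n))\<close>.\<close>

lemma Bernstein_eq_0: "n < k \<Longrightarrow> Bernstein n k x = 0"
  by (simp add: Bernstein_def)

lemma sum_Bernstein_variance: "(\<Sum>k\<le>n. (real k - real n * x)\<^sup>2 * Bernstein n k x) = real n * x * (1 - x)"
proof -
  have expand: "(a - b)\<^sup>2 * w = a * (a - 1) * w + (1 - 2 * b) * (a * w) + b\<^sup>2 * w" for a b w :: real
    by (simp add: algebra_simps power2_eq_square)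
  have "(\<Sum>k\<le>n. (real k - real n * x)\<^sup>2 * Bernstein n k x) =
     (\<Sum>k\<le>n. real k * (real k - 1) * Bernstein n k x) + (1 - 2 * (real n * x)) * (\<Sum>k\<le>n. real k * Bernstein n k x)
      + (real n * x)\<^sup>2 * (\<Sum>k\<le>n. Bernstein n k x)"
    unfolding expand sum.distrib sum_distrib_left ..
  also have "\<dots> = real n * x * (1 - x)"
    unfolding sum_kk_Bernstein sum_k_Bernstein sum_Bernstein by (simp add: power2_eq_square algebra_simps)
  finally show ?thesis .
qed

lemma sum_Bernstein_abs_deviation_le:
  assumes "0 \<le> x" "x \<le> 1"
  shows "(\<Sum>k\<le>n. \<bar>real k - real n * x\<bar> * Bernstein n k x) \<le> sqrt (real n)"
proof (cases "n = 0")
  case False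
  define s where "s = sqrt (real n)"
  have s: "s > 0" "s * s = real n" using False by (auto simp: s_def)
  have am_gm: "\<bar>t\<bar> \<le> t\<^sup>2 / (2 * s) + s / 2" for t :: real
  proof -
    have "0 \<le> (\<bar>t\<bar> - s)\<^sup>2" by simp
    hence "2 * s * \<bar>t\<bar> \<le> t\<^sup>2 + s * s" by (simp add: power2_eq_square algebra_simps)
    thus ?thesis using s by (simp add: field_simps power2_eq_square)
  qed
  have "(\<Sum>k\<le>n. \<bar>real k - real n * x\<bar> * Bernstein n k x) \<le>
        (\<Sum>k\<le>n. ((real k - real n * x)\<^sup>2 / (2 * s) + s / 2) * Bernstein n k x)"
    by (intro sum_mono mult_right_mono am_gm Bernstein_nonneg assms)
  also have "\<dots> = (\<Sum>k\<le>n. (real k - real n * x)\<^sup>2 * Bernstein n k x) / (2 * s)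
                   + s / 2 * (\<Sum>k\<le>n. Bernstein n k x)"
    by (simp only: distrib_right sum.distrib sum_divide_distrib sum_distrib_left times_divide_eq_left)
  also have "\<dots> = real n * x * (1 - x) / (2 * s) + s / 2"
    by (simp only: sum_Bernstein_variance sum_Bernstein mult_1_right)
  also have "\<dots> \<le> real n / (2 * s) + s / 2"
  proof -
    have "x * (1 - x) \<le> 1" using assms by (intro mult_le_one) auto
    hence "real n * x * (1 - x) \<le> real n"
      by (metis mult.assoc mult_left_le of_nat_0_le_iff mult.commute)
    thus ?thesis using s by (simp add: divide_right_mono)
  qed
  also have "\<dots> = s" using s by (simp add: field_simps)
  finally show ?thesis by (simp add: s_def)
qed simp

lemma sum_Bernstein_shifted_deviation_le:
  assumes "0 \<le> x" "x \<le> 1" "\<bar>t\<bar> \<le> 1"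
  shows "(\<Sum>k\<le>n. \<bar>real k - real n * x + t\<bar> * Bernstein n k x) \<le> sqrt (real n) + 1"
proof -
  have "(\<Sum>k\<le>n. \<bar>real k - real n * x + t\<bar> * Bernstein n k x)
      \<le> (\<Sum>k\<le>n. \<bar>real k - real n * x\<bar> * Bernstein n k x + Bernstein n k x)"
  proof (intro sum_mono)
    fix k
    have "\<bar>real k - real n * x + t\<bar> \<le> \<bar>real k - real n * x\<bar> + 1" using assms(3) by linarith
    thus "\<bar>real k - real n * x + t\<bar> * Bernstein n k x \<le> \<bar>real k - real n * x\<bar> * Bernstein n k x + Bernstein n k x"
      using Bernstein_nonneg[OF assms(1,2)] by (metis mult_right_mono distrib_right mult_1)
  qed
  also have "\<dots> \<le> sqrt (real n) + 1"
    using sum_Bernstein_abs_deviation_le[OF assms(1,2)] by (simp add: sum.distrib)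
  finally show ?thesis .
qed

lemma Bernstein_Suc_ratio:
  "real (Suc k) * (1 - x) * Bernstein n (Suc k) x = real (n - k) * x * Bernstein n k x"
proof (cases "k < n")
  case True
  have choose: "Suc k * (n choose Suc k) = (n - k) * (n choose k)"
    using binomial_absorption[of k n] binomial_absorb_comp[of n k] by simp
  have exp: "n - k = Suc (n - Suc k)" using True by simp
  have "real (Suc k) * (1 - x) * Bernstein n (Suc k) x
      = real (Suc k * (n choose Suc k)) * (x * x ^ k * ((1 - x) * (1 - x) ^ (n - Suc k)))"
    unfolding Bernstein_def by (simp only: of_nat_mult power_Suc mult_ac)
  also have "\<dots> = real ((n - k) * (n choose k)) * (x * x ^ k * (1 - x) ^ (n - k))"
    unfolding choose exp by (simp only: power_Suc)
  finally show ?thesis unfolding Bernstein_def by (simp add: mult_ac)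
qed (simp add: Bernstein_def)

lemma Bernstein_Suc_diff_le:
  assumes "0 < x" "x \<le> 1/2"
  shows "\<bar>Bernstein n (Suc k) x - Bernstein n k x\<bar> * (real (Suc n) * x)
     \<le> 2 * \<bar>real (Suc n) * x - real (Suc k)\<bar> * (Bernstein n (Suc k) x + Bernstein n k x)"
proof -
  define B' B c where "B' = Bernstein n (Suc k) x" and "B = Bernstein n k x"
    and "c = real (Suc n) * x - real (Suc k)"
  have nonneg: "0 \<le> B'" "0 \<le> B" using assms by (auto simp: B'_def B_def intro: Bernstein_nonneg)
  have ratio: "real (Suc k) * (1 - x) * B' = real (n - k) * x * B"
    unfolding B'_def B_def by (rule Bernstein_Suc_ratio)
  have diff: "real (n - k) * x * B = (real n - real k) * x * B"
    by (cases "k \<le> n") (simp_all add: of_nat_diff B_def Bernstein_eq_0)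
  have scale: "\<bar>B' - B\<bar> * (real (Suc n) * x) \<le> 2 * \<bar>c * P\<bar>"
    if "real (Suc n) * x \<le> 2 * y" "0 \<le> y" "y * (B' - B) = c * P" for y P
  proof -
    have "\<bar>B' - B\<bar> * (real (Suc n) * x) \<le> \<bar>B' - B\<bar> * (2 * y)"
      using that(1) by (intro mult_left_mono) auto
    also have "\<dots> = 2 * \<bar>y * (B' - B)\<bar>" using that(2) by (simp add: abs_mult)
    finally show ?thesis using that(3) by simp
  qed
  \<comment> \<open>Use whichever side of \<open>ratio\<close> has a factor \<open>\<ge> (n + 1) x / 2\<close>; for \<open>(k + 1) (1 - x)\<close> this needs \<open>x \<le> 1/2\<close>.\<close>
  have "\<bar>B' - B\<bar> * (real (Suc n) * x) \<le> 2 * \<bar>c\<bar> * B' \<or> \<bar>B' - B\<bar> * (real (Suc n) * x) \<le> 2 * \<bar>c\<bar> * B"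
  proof (cases "2 * Suc k \<le> Suc n")
    case True
    hence nk: "real (n - k) = real n - real k" by (simp add: of_nat_diff)
    have "\<bar>B' - B\<bar> * (real (Suc n) * x) \<le> 2 * \<bar>c * B'\<bar>"
    proof (rule scale)
      show "real (Suc n) * x \<le> 2 * (real (n - k) * x)" using True assms(1) by (simp add: nk)
      show "real (n - k) * x * (B' - B) = c * B'"
        using ratio unfolding c_def nk by (simp add: algebra_simps)
    qed (use assms in simp)
    then show ?thesis using nonneg by (simp add: abs_mult)
  next
    case False
    have "\<bar>B' - B\<bar> * (real (Suc n) * x) \<le> 2 * \<bar>c * B\<bar>"
    proof (rule scale)
      have "real (Suc n) \<le> 2 * real (Suc k)" using False by simp
      hence "real (Suc n) * x \<le> 2 * real (Suc k) * x" using assms(1) by (simp add: mult_right_mono)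
      also have "\<dots> \<le> 2 * real (Suc k) * (1 - x)" using assms by (intro mult_left_mono) auto
      finally show "real (Suc n) * x \<le> 2 * (real (Suc k) * (1 - x))" by (simp only: mult.assoc)
      show "real (Suc k) * (1 - x) * (B' - B) = c * B"
        using ratio diff unfolding c_def by (simp add: algebra_simps)
    qed (use assms in simp)
    then show ?thesis using nonneg by (simp add: abs_mult)
  qed
  moreover have "2 * \<bar>c\<bar> * B' \<le> 2 * \<bar>c\<bar> * (B' + B)" "2 * \<bar>c\<bar> * B \<le> 2 * \<bar>c\<bar> * (B' + B)"
    using nonneg by (simp_all add: mult_left_mono)
  ultimately show ?thesis unfolding B'_def B_def c_def by linarith
qed

lemma sum_Bernstein_variation_scaled_le:
  assumes "0 < x" "x \<le> 1/2"
  shows "(\<Sum>k\<le>n. \<bar>Bernstein n (Suc k) x - Bernstein n k x\<bar>) * (real (Suc n) * x)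
    \<le> 4 * (sqrt (real n) + 1)"
proof -
  define c where "c k = \<bar>real (Suc n) * x - real k\<bar>" for k
  have x: "0 \<le> x" "x \<le> 1" using assms by auto
  have at_k: "(\<Sum>k\<le>n. c (Suc k) * Bernstein n k x) \<le> sqrt (real n) + 1"
  proof -
    have "c (Suc k) = \<bar>real k - real n * x + (1 - x)\<bar>" for k
      unfolding c_def by (simp add: algebra_simps abs_minus_commute)
    thus ?thesis using sum_Bernstein_shifted_deviation_le[OF x, of "1 - x"] x by simp
  qed
  have at_Suc_k: "(\<Sum>k\<le>n. c (Suc k) * Bernstein n (Suc k) x) \<le> sqrt (real n) + 1"
  proof -
    have "c k = \<bar>real k - real n * x + - x\<bar>" for k
      unfolding c_def by (simp add: algebra_simps abs_minus_commute)
    hence "(\<Sum>k\<le>n. c k * Bernstein n k x) = (\<Sum>k\<le>n. \<bar>real k - real n * x + - x\<bar> * Bernstein n k x)"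
      by (simp only:)
    also have "\<dots> \<le> sqrt (real n) + 1"
      by (rule sum_Bernstein_shifted_deviation_le) (use x in auto)
    finally have "(\<Sum>k\<le>n. c k * Bernstein n k x) \<le> sqrt (real n) + 1" .
    moreover have "(\<Sum>k\<le>n. c k * Bernstein n k x)
        = c 0 * Bernstein n 0 x + (\<Sum>k\<le>n. c (Suc k) * Bernstein n (Suc k) x)"
      using sum.atMost_Suc_shift[of "\<lambda>k. c k * Bernstein n k x" n] by (simp add: Bernstein_eq_0)
    moreover have "0 \<le> c 0 * Bernstein n 0 x" using x by (simp add: c_def Bernstein_nonneg)
    ultimately show ?thesis by linarith
  qed
  have "(\<Sum>k\<le>n. \<bar>Bernstein n (Suc k) x - Bernstein n k x\<bar>) * (real (Suc n) * x)
      \<le> (\<Sum>k\<le>n. 2 * c (Suc k) * (Bernstein n (Suc k) x + Bernstein n k x))"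
    unfolding sum_distrib_right c_def by (intro sum_mono Bernstein_Suc_diff_le assms)
  also have "\<dots> = 2 * (\<Sum>k\<le>n. c (Suc k) * Bernstein n (Suc k) x) + 2 * (\<Sum>k\<le>n. c (Suc k) * Bernstein n k x)"
    by (simp add: sum.distrib sum_distrib_left algebra_simps)
  also have "\<dots> \<le> 4 * (sqrt (real n) + 1)"
    using at_k at_Suc_k by simp
  finally show ?thesis .
qed

lemma sum_Bernstein_variation_le:
  assumes "0 < x" "x \<le> 1/2" "n \<ge> 1"
  shows "(\<Sum>k\<le>n. \<bar>Bernstein n (Suc k) x - Bernstein n k x\<bar>) \<le> 8 / (x * sqrt (real n))"
proof -
  define s where "s = sqrt (real n)"
  have s: "s \<ge> 1" "s * s = real n" using assms(3) by (auto simp: s_def)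
  have pos: "real (Suc n) * x > 0" using assms by simp
  have "(\<Sum>k\<le>n. \<bar>Bernstein n (Suc k) x - Bernstein n k x\<bar>) \<le> 4 * (s + 1) / (real (Suc n) * x)"
    using sum_Bernstein_variation_scaled_le[OF assms(1,2), of n] pos
    by (simp add: s_def pos_le_divide_eq)
  also have "\<dots> \<le> 8 / (x * s)"
  proof -
    have "s * 1 \<le> s * s" using s by (intro mult_left_mono) auto
    hence "(s + 1) * s \<le> 2 * (s * s + 1)" by (simp add: algebra_simps)
    hence "4 * x * ((s + 1) * s) \<le> 4 * x * (2 * (s * s + 1))"
      using assms(1) by (intro mult_left_mono) auto
    moreover have "real (Suc n) = s * s + 1" using s by simp
    ultimately have "4 * (s + 1) * (x * s) \<le> 8 * (real (Suc n) * x)"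
      by (simp add: algebra_simps)
    thus ?thesis using pos s assms(1) by (simp add: divide_simps mult.commute)
  qed
  finally show ?thesis by (simp add: s_def)
qed

lemma sum_by_parts:
  fixes P G :: "nat \<Rightarrow> 'a::comm_ring"
  shows "(\<Sum>l<N. P l * (G (Suc l) - G l))
    = P N * G N - P 0 * G 0 - (\<Sum>l<N. G (Suc l) * (P (Suc l) - P l))"
  by (induction N) (simp_all add: algebra_simps)

lemma abs_sum_mult_le_variation:
  fixes P g :: "nat \<Rightarrow> real"
  assumes "P (Suc n) = 0" and partial_sums: "\<And>N. \<bar>\<Sum>j<N. g j\<bar> \<le> M"
  shows "\<bar>\<Sum>l\<le>n. P l * g l\<bar> \<le> M * (\<Sum>l\<le>n. \<bar>P (Suc l) - P l\<bar>)"
proof -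
  define G where "G N = (\<Sum>j<N. g j)" for N
  have G_bound: "\<bar>G N\<bar> \<le> M" for N unfolding G_def by (rule partial_sums)
  have "G (Suc l) - G l = g l" for l by (simp add: G_def)
  hence "(\<Sum>l\<le>n. P l * g l) = (\<Sum>l<Suc n. P l * (G (Suc l) - G l))"
    by (simp only: lessThan_Suc_atMost)
  also have "\<dots> = - (\<Sum>l\<le>n. G (Suc l) * (P (Suc l) - P l))"
    unfolding sum_by_parts by (simp add: assms(1) G_def lessThan_Suc_atMost)
  finally have "\<bar>\<Sum>l\<le>n. P l * g l\<bar> \<le> (\<Sum>l\<le>n. \<bar>G (Suc l)\<bar> * \<bar>P (Suc l) - P l\<bar>)"
    by (simp add: abs_mult sum_abs order.trans[OF sum_abs])
  also have "\<dots> \<le> (\<Sum>l\<le>n. M * \<bar>P (Suc l) - P l\<bar>)"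
    by (intro sum_mono mult_right_mono G_bound abs_ge_zero)
  finally show ?thesis by (simp add: sum_distrib_left)
qed

lemma sum_dvd_indicator_minus_density:
  assumes "d > 0"
  shows "real d * (\<Sum>j<N. (if d dvd j + a then 1 else 0) - 1 / real d)
    = real ((a + d - 1) mod d) - real ((N + a + d - 1) mod d)"
  \<comment> \<open>\<open>(a + d - 1) mod d\<close> stands for \<open>(a - 1) mod d\<close>, avoiding truncated subtraction at \<open>a = 0\<close>.\<close>
proof (induction N)
  case (Suc N)
  define m where "m = N + a + d - 1"
  have m: "Suc N + a + d - 1 = Suc m" using assms by (simp add: m_def)
  have "d dvd N + a \<longleftrightarrow> Suc (m mod d) = d"
  proof -
    have "d dvd N + a \<longleftrightarrow> d dvd Suc m" using assms by (simp add: m_def)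
    also have "\<dots> \<longleftrightarrow> Suc (m mod d) = d" using assms by (simp add: dvd_eq_mod_eq_0 mod_Suc)
    finally show ?thesis .
  qed
  hence step: "real (Suc m mod d) = real (m mod d) + 1 - real d * (if d dvd N + a then 1 else 0)"
    by (cases "d dvd N + a") (simp_all add: mod_Suc flip: of_nat_Suc)
  have "real d * (\<Sum>j<Suc N. (if d dvd j + a then 1 else 0) - 1 / real d)
      = real d * (\<Sum>j<N. (if d dvd j + a then 1 else 0) - 1 / real d) + real d * (if d dvd N + a then 1 else 0) - 1"
    using assms by (simp add: algebra_simps)
  then show ?case unfolding m using Suc.IH[folded m_def] step by linarith
qed simp

lemma abs_sum_dvd_indicator_minus_density_le:
  assumes "d > 0"
  shows "\<bar>\<Sum>j<N. (if d dvd j + a then 1 else 0) - 1 / real d\<bar> \<le> 1"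
proof -
  have "real ((a + d - 1) mod d) < real d" "real ((N + a + d - 1) mod d) < real d"
    using assms by simp_all
  hence "\<bar>real d * (\<Sum>j<N. (if d dvd j + a then 1 else 0) - 1 / real d)\<bar> \<le> real d"
    unfolding sum_dvd_indicator_minus_density[OF assms] by linarith
  thus ?thesis using assms by (simp add: abs_mult)
qed

lemma abs_sum_Bernstein_dvd_minus_density_le:
  assumes "d > 0"
  shows "\<bar>(\<Sum>l\<le>n. Bernstein n l x * (if d dvd l + a then 1 else 0)) - 1 / real d\<bar>
    \<le> (\<Sum>l\<le>n. \<bar>Bernstein n (Suc l) x - Bernstein n l x\<bar>)"
proof -
  have "(\<Sum>l\<le>n. Bernstein n l x * (if d dvd l + a then 1 else 0)) - 1 / real d
      = (\<Sum>l\<le>n. Bernstein n l x * ((if d dvd l + a then 1 else 0) - 1 / real d))"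
    by (simp add: right_diff_distrib sum_subtractf flip: sum_divide_distrib)
  also have "\<bar>\<dots>\<bar> \<le> 1 * (\<Sum>l\<le>n. \<bar>Bernstein n (Suc l) x - Bernstein n l x\<bar>)"
    by (intro abs_sum_mult_le_variation abs_sum_dvd_indicator_minus_density_le assms Bernstein_eq_0) simp
  finally show ?thesis by simp
qed

lemma abs_mu_le_1: "\<bar>mu d\<bar> \<le> 1"
  by (simp add: mu_def power_abs)

lemma mu_prime_mult:
  assumes "prime p" "e > 0"
  shows "mu (p * e) = (if p dvd e then 0 else - mu e)"
proof (cases "p dvd e")
  case True
  hence "p\<^sup>2 dvd p * e" by (simp add: power2_eq_square)
  hence "\<not> squarefree (p * e)"
    unfolding squarefree_def using assms(1) not_prime_unit by blast
  then show ?thesis using True by (simp add: mu_def)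
next
  case False
  have "coprime p e" using assms(1) False by (rule prime_imp_coprime)
  hence "squarefree (p * e) \<longleftrightarrow> squarefree e"
    using squarefree_mult_coprime[of p e] squarefree_prime[OF assms(1)] squarefree_multD(2)[of p e]
    by blast
  moreover have "prime_factors (p * e) = insert p (prime_factors e)"
    using assms by (simp add: prime_factors_product prime_prime_factors)
  moreover have "p \<notin> prime_factors e" using False by auto
  ultimately show ?thesis using False assms by (simp add: mu_def)
qed

lemma sum_mu_divisors:
  assumes "N > 0"
  shows "(\<Sum>d | d dvd N. mu d) = (if N = 1 then 1 else 0)"
proof (cases "N = 1")
  case False
  then obtain p where p: "prime p" "p dvd N" using assms by (metis prime_factor_nat)
  then obtain M where M: "N = p * M" by blast
  have "M > 0" using M assms by auto
  have split: "(\<Sum>d | d dvd N. mu d) = (\<Sum>d | d dvd N \<and> p dvd d. mu d) + (\<Sum>d | d dvd N \<and> \<not> p dvd d. mu d)"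
  proof -
    have "(\<Sum>d | d dvd N. mu d)
        = (\<Sum>d \<in> {d. d dvd N} \<inter> {d. p dvd d}. mu d) + (\<Sum>d \<in> {d. d dvd N} - {d. p dvd d}. mu d)"
      using assms by (intro sum.Int_Diff) simp
    also have "{d. d dvd N} \<inter> {d. p dvd d} = {d. d dvd N \<and> p dvd d}" by blast
    also have "{d. d dvd N} - {d. p dvd d} = {d. d dvd N \<and> \<not> p dvd d}" by blast
    finally show ?thesis .
  qed
  have "{d. d dvd N \<and> p dvd d} = (\<lambda>e. p * e) ` {e. e dvd M}"
    using M p by (auto simp: dvd_def)
  moreover have "inj_on (\<lambda>e. p * e) {e. e dvd M}" using p by (auto simp: inj_on_def prime_gt_0_nat)
  ultimately have "(\<Sum>d | d dvd N \<and> p dvd d. mu d) = (\<Sum>e | e dvd M. mu (p * e))"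
    by (simp add: sum.reindex)
  also have "\<dots> = (\<Sum>e | e dvd M. if p dvd e then 0 else - mu e)"
    by (intro sum.cong refl mu_prime_mult p) (auto intro: dvd_pos_nat[OF \<open>M > 0\<close>])
  also have "\<dots> = - (\<Sum>e | e dvd M \<and> \<not> p dvd e. mu e)"
    using \<open>M > 0\<close> by (simp add: sum.If_cases sum_negf Collect_conj_eq Collect_neg_eq)
  also have "{e. e dvd M \<and> \<not> p dvd e} = {d. d dvd N \<and> \<not> p dvd d}"
  proof safe
    fix e assume "e dvd N" "\<not> p dvd e"
    hence "coprime e p" using p(1) by (metis coprime_commute prime_imp_coprime)
    thus "e dvd M" using \<open>e dvd N\<close> M by (metis coprime_dvd_mult_right_iff)
  qed (use M in auto)
  finally show ?thesis using split False by simp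
qed (simp add: mu_def)

lemma coprime_indicator_eq_sum_mu:
  assumes "m > 0"
  shows "(if gcd k m = 1 then 1 else 0 :: real) = (\<Sum>d | d dvd m. of_int (mu d) * (if d dvd k then 1 else 0))"
proof -
  have "(\<Sum>d | d dvd m. of_int (mu d) * (if d dvd k then 1 else 0 :: real))
      = (\<Sum>d \<in> {d. d dvd m}. if d dvd k then of_int (mu d) else 0)"
    by (intro sum.cong) auto
  also have "\<dots> = (\<Sum>d \<in> {d \<in> {d. d dvd m}. d dvd k}. of_int (mu d))"
    by (rule sum.inter_filter[symmetric]) (use assms in simp)
  also have "{d \<in> {d. d dvd m}. d dvd k} = {d. d dvd gcd k m}" by auto
  also have "(\<Sum>d | d dvd gcd k m. real_of_int (mu d)) = of_int (\<Sum>d | d dvd gcd k m. mu d)"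
    by simp
  also have "\<dots> = (if gcd k m = 1 then 1 else 0)"
  proof -
    have "gcd k m > 0" using assms by simp
    then show ?thesis by (subst sum_mu_divisors) simp_all
  qed
  finally show ?thesis ..
qed

lemma abs_sum_coprime_minus_mu_density_le:
  fixes w :: "nat \<Rightarrow> real"
  assumes "m > 0"
    and density: "\<And>d. d dvd m \<Longrightarrow> \<bar>(\<Sum>l\<le>n. w l * (if d dvd l + a then 1 else 0)) - 1 / real d\<bar> \<le> V"
  shows "\<bar>(\<Sum>l\<le>n. w l * (if gcd (l + a) m = 1 then 1 else 0))
      - (\<Sum>d | d dvd m. real_of_int (mu d) / real d)\<bar> \<le> real (tau m) * V"
proof -
  define S where "S d = (\<Sum>l\<le>n. w l * (if d dvd l + a then 1 else 0))" for d
  have "(\<Sum>l\<le>n. w l * (if gcd (l + a) m = 1 then 1 else 0))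
      = (\<Sum>l\<le>n. w l * (\<Sum>d | d dvd m. of_int (mu d) * (if d dvd l + a then 1 else 0)))"
    unfolding coprime_indicator_eq_sum_mu[OF assms(1)] ..
  also have "\<dots> = (\<Sum>d | d dvd m. of_int (mu d) * S d)"
    unfolding S_def by (simp add: sum_distrib_left sum_distrib_right mult_ac sum.swap[of _ "{..n}"])
  finally have "(\<Sum>l\<le>n. w l * (if gcd (l + a) m = 1 then 1 else 0))
      - (\<Sum>d | d dvd m. real_of_int (mu d) / real d) = (\<Sum>d | d dvd m. of_int (mu d) * (S d - 1 / real d))"
    by (simp add: sum_subtractf right_diff_distrib)
  also have "\<bar>\<dots>\<bar> \<le> (\<Sum>d | d dvd m. \<bar>of_int (mu d) * (S d - 1 / real d)\<bar>)"
    by (rule sum_abs)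
  also have "\<dots> \<le> (\<Sum>d | d dvd m. V)"
  proof (intro sum_mono)
    fix d assume "d \<in> {d. d dvd m}"
    hence "\<bar>S d - 1 / real d\<bar> \<le> V" unfolding S_def by (simp add: density)
    moreover have "\<bar>real_of_int (mu d)\<bar> \<le> 1" using abs_mu_le_1[of d] by linarith
    ultimately have "\<bar>real_of_int (mu d)\<bar> * \<bar>S d - 1 / real d\<bar> \<le> 1 * V"
      by (intro mult_mono) auto
    thus "\<bar>of_int (mu d) * (S d - 1 / real d)\<bar> \<le> V" by (simp add: abs_mult)
  qed
  also have "\<dots> = real (tau m) * V" by (simp add: tau_def)
  finally show ?thesis .
qed

theorem lemma2:
  fixes \<alpha> :: real
  assumes "0 < \<alpha>" and "\<alpha> \<le> 1/2"
  shows "\<exists>C>0. \<forall>n::nat. \<forall>a::nat. \<forall>b::nat. n \<ge> 1 \<longrightarrow>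
    \<bar>(\<Sum>l=0..n. real (n choose l) * \<alpha> ^ l * (1 - \<alpha>) ^ (n - l) *
          (if gcd (l + a) (n + b) = 1 then 1 else 0))
      - (\<Sum>d | d dvd (n + b). real_of_int (mu d) / real d)\<bar>
    \<le> C * real (tau (n + b)) / sqrt (real n)"
proof (intro exI[of _ "8 / \<alpha>"] conjI allI impI)
  show "8 / \<alpha> > 0" using assms by simp
  fix n a b :: nat assume "n \<ge> 1"
  define V where "V = (\<Sum>l\<le>n. \<bar>Bernstein n (Suc l) \<alpha> - Bernstein n l \<alpha>\<bar>)"
  have sum_eq: "(\<Sum>l=0..n. real (n choose l) * \<alpha> ^ l * (1 - \<alpha>) ^ (n - l) *
        (if gcd (l + a) (n + b) = 1 then 1 else 0))
      = (\<Sum>l\<le>n. Bernstein n l \<alpha> * (if gcd (l + a) (n + b) = 1 then 1 else 0))"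
    by (simp add: Bernstein_def atLeast0AtMost)
  have "\<bar>(\<Sum>l\<le>n. Bernstein n l \<alpha> * (if gcd (l + a) (n + b) = 1 then 1 else 0))
      - (\<Sum>d | d dvd (n + b). real_of_int (mu d) / real d)\<bar> \<le> real (tau (n + b)) * V"
    unfolding V_def
  proof (intro abs_sum_coprime_minus_mu_density_le abs_sum_Bernstein_dvd_minus_density_le)
    show "n + b > 0" using \<open>n \<ge> 1\<close> by simp
    then show "d > 0" if "d dvd n + b" for d using that by (rule dvd_pos_nat)
  qed
  also have "\<dots> \<le> real (tau (n + b)) * (8 / (\<alpha> * sqrt (real n)))"
    unfolding V_def using assms \<open>n \<ge> 1\<close> by (intro mult_left_mono sum_Bernstein_variation_le) auto
  also have "\<dots> = 8 / \<alpha> * real (tau (n + b)) / sqrt (real n)"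
    by simp
  finally show "\<bar>(\<Sum>l=0..n. real (n choose l) * \<alpha> ^ l * (1 - \<alpha>) ^ (n - l) *
          (if gcd (l + a) (n + b) = 1 then 1 else 0))
      - (\<Sum>d | d dvd (n + b). real_of_int (mu d) / real d)\<bar>
    \<le> 8 / \<alpha> * real (tau (n + b)) / sqrt (real n)"
    unfolding sum_eq .
qed

end
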